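(* Let $n \geq 3$, let $V_k$ denote the volume of the unit $k$-sphere in $\mathbb{R}^{k+1}$, and let $$K_n = \frac{\left(P_{n-3}(1)+\left(1-\frac{1}{3^{n-2}}\right)\left(P_{n-2}(1)+\log\left(\frac{3}{4}\right)\right)\right)2^{n-2}V_{n-2}V_{n-3}\Gamma(\frac{n}{2})^2}{(n-2)^2V_{n-1}\Gamma(n)}.$$ Then $$K_n \geq \left(\frac{2\pi e}{n-1}\right)^{\frac{n-1}{2}}\left(\frac{3\left(P_{n-3}(1)+\left(1-\frac{1}{3^{n-2}}\right)\left(P_{n-2}(1)+\log\left(\frac{3}{4}\right)\right)\right)}{2^{\frac{3}{2}}e^{\frac52}(n-2)} \right).$$
   Context: For $k \geq 1$, $P_k(1) = 1+\frac12+\cdots+\frac1k$ (the $k$-th harmonic number), and $P_0(1)=0$. *)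

theory Defs
  imports "HOL-Analysis.Analysis"
begin

definition sphere_vol :: "nat \<Rightarrow> real" where
  "sphere_vol k = 2 * pi powr ((real k + 1) / 2) / Gamma ((real k + 1) / 2)"

text \<open>P_k(1) is the k-th harmonic number (library harm, with harm 0 = 0).\<close>
definition P1 :: "nat \<Rightarrow> real" where
  "P1 k = harm k"

definition K :: "nat \<Rightarrow> real" where
  "K n = (P1 (n-3) + (1 - 1 / 3 ^ (n-2)) * (P1 (n-2) + ln (3/4)))
          * 2 ^ (n-2) * sphere_vol (n-2) * sphere_vol (n-3) * Gamma (real n / 2) ^ 2
        / ((real n - 2) ^ 2 * sphere_vol (n-1) * Gamma (real n))"

end

theory Submission
  imports Defs
begin

text \<open>Write n = m + 3. Both sides contain the same nonnegative harmonic factor, so it suffices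
  to compare what remains of them. By V_(k+2) = 2 pi V_k / (k + 1) and Gamma (x + 1) = x Gamma x,
  the remaining factor of K satisfies the exact two-step recursion
  f (m + 2) = f m * 2 pi (m + 1) / ((m + 2) (m + 4)), while the remaining factor of the bound
  satisfies the same recursion as an inequality, because e y / (y + 1) <= (1 + 2 / y) powr (y / 2)
  for y > 0. Induction in steps of two then reduces everything to m = 0 and m = 1, where the
  two factors are pi / 4 and 2 / 3 against roughly 0.744 and 0.591.\<close>

lemma Gamma_plus1_pos: "x > 0 \<Longrightarrow> Gamma (x + 1) = x * Gamma (x :: real)"
  by (rule Gamma_plus1) (auto elim!: nonpos_Ints_cases)

lemma sphere_vol_pos: "sphere_vol k > 0"
  unfolding sphere_vol_def by (intro divide_pos_pos Gamma_real_pos) auto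

lemma sphere_vol_add2: "sphere_vol (k + 2) = 2 * pi * sphere_vol k / (real k + 1)"
proof -
  define x where "x = (real k + 1) / 2"
  have "x > 0" unfolding x_def by simp
  have "(real (k + 2) + 1) / 2 = x + 1"
    unfolding x_def by (simp add: add_divide_distrib)
  then have "sphere_vol (k + 2) = 2 * pi powr (x + 1) / Gamma (x + 1)"
    unfolding sphere_vol_def by (simp only:)
  also have "\<dots> = 2 * pi * sphere_vol k / (2 * x)"
    unfolding sphere_vol_def x_def[symmetric] using \<open>x > 0\<close>
    by (simp add: Gamma_plus1_pos powr_add)
  finally show ?thesis unfolding x_def by (simp add: field_simps)
qed

lemma sphere_vol_0: "sphere_vol 0 = 2"
  unfolding sphere_vol_def by (simp add: powr_half_sqrt Gamma_one_half_real)

lemma sphere_vol_1: "sphere_vol 1 = 2 * pi"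
  unfolding sphere_vol_def by simp

definition vol_factor :: "nat \<Rightarrow> real" where
  "vol_factor m = 2 ^ (m + 1) * sphere_vol (m + 1) * sphere_vol m * Gamma ((real m + 3) / 2) ^ 2
     / ((real m + 1) ^ 2 * sphere_vol (m + 2) * Gamma (real m + 3))"

definition harm_factor :: "nat \<Rightarrow> real" where
  "harm_factor m = P1 m + (1 - 1 / 3 ^ (m + 1)) * (P1 (m + 1) + ln (3 / 4))"

lemma K_eq_harm_factor_vol_factor: "K (m + 3) = harm_factor m * vol_factor m"
  unfolding K_def harm_factor_def vol_factor_def by (simp add: add_divide_distrib ac_simps)

lemma vol_factor_eq:
  "vol_factor m = 2 ^ m * sphere_vol (m + 1) * Gamma ((real m + 3) / 2) ^ 2
     / (pi * (real m + 1) * Gamma (real m + 3))"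
  using sphere_vol_pos[of m] Gamma_real_pos[of "real m + 3"]
  unfolding vol_factor_def sphere_vol_add2
  by (simp add: divide_simps) (simp add: algebra_simps power2_eq_square)

lemma vol_factor_add2:
  "vol_factor (m + 2) = vol_factor m * (2 * pi * (real m + 1) / ((real m + 2) * (real m + 4)))"
proof -
  have V: "sphere_vol (m + 2 + 1) = 2 * pi * sphere_vol (m + 1) / (real m + 2)"
    using sphere_vol_add2[of "m + 1"] by (simp add: add_ac)
  have G1: "Gamma ((real (m + 2) + 3) / 2) = (real m + 3) / 2 * Gamma ((real m + 3) / 2)"
    using Gamma_plus1_pos[of "(real m + 3) / 2"] by (simp add: add_divide_distrib)
  have G2: "Gamma (real (m + 2) + 3) = (real m + 4) * (real m + 3) * Gamma (real m + 3)"
    using Gamma_plus1_pos[of "real m + 3"] Gamma_plus1_pos[of "real m + 4"]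
    by (simp add: add_ac)
  have "Gamma ((real m + 3) / 2) > 0" "Gamma (real m + 3) > 0"
    by simp_all
  then show ?thesis
    unfolding vol_factor_eq[of "m + 2"] vol_factor_eq[of m] V G1 G2
    by (simp add: divide_simps) (simp add: algebra_simps power2_eq_square)
qed

lemma vol_factor_0: "vol_factor 0 = pi / 4"
proof -
  have G: "Gamma (3 / 2 :: real) = sqrt pi / 2"
    using Gamma_plus1_pos[of "1 / 2"] by (simp add: Gamma_one_half_real)
  have "Gamma (3 / 2 :: real) ^ 2 = pi / 4"
    unfolding G by (simp add: power_divide)
  moreover have "Gamma (3 :: real) = 2"
    by (simp add: Gamma_numeral)
  ultimately show ?thesis
    by (simp add: vol_factor_eq[of 0] sphere_vol_1 del: One_nat_def)
qed

lemma vol_factor_1: "vol_factor 1 = 2 / 3"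
proof -
  have "sphere_vol 2 = 4 * pi"
    using sphere_vol_add2[of 0] by (simp add: sphere_vol_0 numeral_2_eq_2)
  then show ?thesis
    by (simp add: vol_factor_eq[of 1] sphere_vol_1 Gamma_numeral fact_numeral del: One_nat_def)
qed

lemma exp1_ratio_le_powr:
  fixes y :: real
  assumes "y > 0"
  shows "exp 1 * y / (y + 1) \<le> ((y + 2) / y) powr (y / 2)"
proof -
  have ln1: "ln (y + 1) - ln y \<ge> 2 / (2 * y + 1)"
    using ln_inverse_approx_ge[of y "y + 1"] assms by simp
  have ln2: "ln (y + 2) - ln y \<ge> 4 / (2 * y + 2)"
    using ln_inverse_approx_ge[of y "y + 2"] assms by simp
  have "ln (exp 1 * y / (y + 1)) = 1 - (ln (y + 1) - ln y)"
    using assms by (simp add: ln_mult ln_div)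
  also have "\<dots> \<le> 1 - 2 / (2 * y + 1)"
    using ln1 by simp
  also have "\<dots> \<le> y / 2 * (4 / (2 * y + 2))"
    using assms by (simp add: field_simps)
  also have "\<dots> \<le> y / 2 * (ln (y + 2) - ln y)"
    using ln2 assms by (intro mult_left_mono) auto
  also have "\<dots> = ln (((y + 2) / y) powr (y / 2))"
    using assms by (simp add: ln_powr ln_div)
  finally show ?thesis
    using assms by (subst (asm) ln_le_cancel_iff) auto
qed

lemma powr_ratio_add2_le:
  fixes Q y :: real
  assumes "Q > 0" "y > 0"
  shows "(Q / (y + 2)) powr ((y + 2) / 2) / (y + 1) \<le> (Q / y) powr (y / 2) * (Q / (exp 1 * y * (y + 2)))"
proof -
  have split: "(Q / (y + 2)) powr ((y + 2) / 2) = Q / (y + 2) * (Q / y) powr (y / 2) * (y / (y + 2)) powr (y / 2)"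
  proof -
    have eq: "Q / (y + 2) = Q / y * (y / (y + 2))"
      using assms by simp
    have half: "(y + 2) / 2 = y / 2 + 1"
      by simp
    have "(Q / (y + 2)) powr (y / 2) = (Q / y) powr (y / 2) * (y / (y + 2)) powr (y / 2)"
      unfolding eq by (rule powr_mult)
    then show ?thesis
      unfolding half powr_add using assms by simp
  qed
  have "(y / (y + 2)) powr (y / 2) = 1 / ((y + 2) / y) powr (y / 2)"
    using assms by (simp add: powr_divide)
  also have "\<dots> \<le> 1 / (exp 1 * y / (y + 1))"
    using exp1_ratio_le_powr[OF assms(2)] assms by (intro divide_left_mono) auto
  finally have ratio: "(y / (y + 2)) powr (y / 2) \<le> (y + 1) / (exp 1 * y)"
    by simp
  have "(Q / (y + 2)) powr ((y + 2) / 2) / (y + 1)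
      \<le> Q / (y + 2) * (Q / y) powr (y / 2) * ((y + 1) / (exp 1 * y)) / (y + 1)"
    unfolding split using ratio assms by (intro divide_right_mono mult_left_mono) auto
  also have "\<dots> = (Q / y) powr (y / 2) * (Q / (exp 1 * y * (y + 2)))"
    using assms by (simp add: divide_simps add_pos_pos)
  finally show ?thesis .
qed

definition vol_factor_bound :: "nat \<Rightarrow> real" where
  "vol_factor_bound m = (2 * pi * exp 1 / (real m + 2)) powr ((real m + 2) / 2)
     * (3 / (2 powr (3 / 2) * exp (5 / 2) * (real m + 1)))"

lemma vol_factor_bound_add2_le:
  "vol_factor_bound (m + 2) \<le> vol_factor_bound m * (2 * pi * (real m + 1) / ((real m + 2) * (real m + 4)))"
proof -
  define c :: real where "c = 3 / (2 powr (3 / 2) * exp (5 / 2))"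
  define Q :: real where "Q = 2 * pi * exp 1"
  define T where "T y = (Q / y) powr (y / 2)" for y :: real
  have vfb: "vol_factor_bound k = c * (T (real k + 2) / (real k + 1))" for k
    unfolding vol_factor_bound_def c_def T_def Q_def by simp
  have "c > 0" "Q > 0"
    unfolding c_def Q_def by simp_all
  have nz: "real m + 1 \<noteq> 0" "real m + 2 \<noteq> 0" "real m + 4 \<noteq> 0"
    by linarith+
  have "vol_factor_bound (m + 2) = c * (T (real m + 2 + 2) / (real m + 2 + 1))"
    unfolding vfb by (simp add: add_ac)
  also have "\<dots> \<le> c * (T (real m + 2) * (Q / (exp 1 * (real m + 2) * (real m + 2 + 2))))"
    using powr_ratio_add2_le[OF \<open>Q > 0\<close>, of "real m + 2"] \<open>c > 0\<close> unfolding T_def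
    by (intro mult_left_mono) auto
  also have "\<dots> = vol_factor_bound m * (2 * pi * (real m + 1) / ((real m + 2) * (real m + 4)))"
    unfolding vfb Q_def using nz by (simp add: divide_simps)
  finally show ?thesis .
qed

lemma exp1_gt_271: "exp 1 > (271 / 100 :: real)"
  using e_approx_32 by (simp add: abs_if split: if_split_asm)

lemma vol_factor_bound_0_le: "vol_factor_bound 0 \<le> pi / 4"
proof -
  have "(542 / 100) ^ 3 \<le> (2 * exp 1 :: real) ^ 3"
    using exp1_gt_271 by (intro power_mono) auto
  then have "12 \<le> sqrt ((2 * exp 1 :: real) ^ 3)"
    by (intro real_le_rsqrt) (simp add: power_divide)
  also have "\<dots> = (2 * exp 1) powr (3 / 2)"
    by (subst powr_half_sqrt_powr) (simp_all add: powr_numeral)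
  also have "\<dots> = 2 powr (3 / 2) * exp (3 / 2)"
    by (simp add: powr_mult exp_powr_real)
  finally have twelve: "12 \<le> 2 powr (3 / 2) * exp (3 / 2 :: real)" .
  have "exp (5 / 2 :: real) = exp 1 * exp (3 / 2)"
    by (simp flip: exp_add)
  then have "vol_factor_bound 0 = 3 * pi / (2 powr (3 / 2) * exp (3 / 2))"
    unfolding vol_factor_bound_def by simp
  also have "\<dots> \<le> 3 * pi / 12"
    using twelve by (intro divide_left_mono) auto
  finally show ?thesis by simp
qed

lemma vol_factor_bound_1_le: "vol_factor_bound 1 \<le> 2 / 3"
proof -
  have "2 * pi * exp 1 / 3 = 2 * (pi / 3) * exp 1"
    by simp
  then have "(2 * pi * exp 1 / 3) powr (3 / 2) = 2 powr (3 / 2) * (pi / 3) powr (3 / 2) * exp (3 / 2)"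
    by (simp only: powr_mult exp_powr_real) simp
  moreover have "exp (5 / 2 :: real) = exp 1 * exp (3 / 2)"
    by (simp flip: exp_add)
  ultimately have "vol_factor_bound 1 = 3 * (pi / 3) powr (3 / 2) / (2 * exp 1)"
    unfolding vol_factor_bound_def by simp
  also have "\<dots> \<le> 3 * (pi / 3) ^ 2 / (2 * exp 1)"
    using powr_mono[of "3 / 2" 2 "pi / 3"] pi_gt3
    by (intro divide_right_mono mult_left_mono) (simp_all add: powr_numeral)
  also have "\<dots> \<le> 3 * (105 / 100) ^ 2 / (2 * (271 / 100))"
  proof (rule frac_le)
    show "3 * (pi / 3) ^ 2 \<le> 3 * (105 / 100 :: real) ^ 2"
      using pi_approx(2) pi_gt3 by (intro mult_left_mono power_mono) auto
  qed (use exp1_gt_271 in auto)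
  finally show ?thesis by (simp add: power_divide)
qed

lemma vol_factor_bound_le: "vol_factor_bound m \<le> vol_factor m"
proof (induction m rule: nat_induct2)
  case 0
  then show ?case
    using vol_factor_bound_0_le vol_factor_0 by simp
next
  case 1
  then show ?case
    using vol_factor_bound_1_le vol_factor_1 by simp
next
  case (step m)
  have "vol_factor_bound (m + 2) \<le> vol_factor_bound m * (2 * pi * (real m + 1) / ((real m + 2) * (real m + 4)))"
    by (rule vol_factor_bound_add2_le)
  also have "\<dots> \<le> vol_factor m * (2 * pi * (real m + 1) / ((real m + 2) * (real m + 4)))"
    using step by (intro mult_right_mono) auto
  also have "\<dots> = vol_factor (m + 2)"
    by (rule vol_factor_add2[symmetric])
  finally show ?case .
qed

lemma harm_factor_nonneg: "harm_factor m \<ge> 0"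
proof -
  have "ln (4 / 3 :: real) \<le> 1"
    using ln_le_minus_one[of "4 / 3"] by simp
  moreover have "harm (m + 1) \<ge> (1 :: real)"
    using harm_mono[of 1 "m + 1"] by (simp add: harm_expand)
  ultimately have harm_ln: "0 \<le> harm (m + 1) + ln (3 / 4 :: real)"
    by (simp add: ln_div)
  have "(0 :: real) \<le> 1 - 1 / 3 ^ (m + 1)"
    using one_le_power[of "3 :: real" "m + 1"] by simp
  then show ?thesis
    unfolding harm_factor_def P1_def
    by (intro add_nonneg_nonneg[OF harm_nonneg] mult_nonneg_nonneg harm_ln)
qed

theorem lemma4p1:
  fixes n :: nat
  assumes "n \<ge> 3"
  shows "K n \<ge> (2 * pi * exp 1 / (real n - 1)) powr ((real n - 1) / 2)
     * (3 * (P1 (n-3) + (1 - 1 / 3 ^ (n-2)) * (P1 (n-2) + ln (3/4)))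
        / (2 powr (3/2) * exp (5/2) * (real n - 2)))"
proof -
  obtain m where n: "n = m + 3"
    using le_Suc_ex[OF assms] by (auto simp: add.commute)
  have "(2 * pi * exp 1 / (real n - 1)) powr ((real n - 1) / 2)
     * (3 * (P1 (n-3) + (1 - 1 / 3 ^ (n-2)) * (P1 (n-2) + ln (3/4)))
        / (2 powr (3/2) * exp (5/2) * (real n - 2))) = harm_factor m * vol_factor_bound m"
    unfolding n harm_factor_def vol_factor_bound_def by (simp add: algebra_simps)
  also have "\<dots> \<le> harm_factor m * vol_factor m"
    by (rule mult_left_mono[OF vol_factor_bound_le harm_factor_nonneg])
  also have "\<dots> = K n"
    unfolding n by (rule K_eq_harm_factor_vol_factor[symmetric])
  finally show ?thesis .
qed

end
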